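(* Let $\mathcal{F}=\{f_i\}_{i=1}^N$ be a frame for $\mathbb{R}^n$. Then $d(\mathcal{F})$ is the largest integer $k$ such that there exists a $k$-dimensional maximal $\mathcal{F}$-PR subspace.
   Context: A frame for $\mathbb{R}^n$ is a finite spanning sequence. For $\Lambda\subseteq\{1,\dots,N\}$ let $\mathcal{F}_\Lambda=\{f_i\}_{i\in\Lambda}$, $\Lambda^c$ its complement, and $d_\Lambda=\max\{\dim\mathrm{span}(\mathcal{F}_\Lambda),\dim\mathrm{span}(\mathcal{F}_{\Lambda^c})\}$; define $d(\mathcal{F})=\min\{d_\Lambda:\Lambda\subseteq\{1,\dots,N\}\}$. A finite sequence $\{g_i\}$ in a subspace $M$ is a phase-retrievable frame for $M$ if it spans $M$ and $|\langle x,g_i\rangle|=|\langle y,g_i\rangle|$ for all $i$ with $x,y\in M$ implies $x=\pm y$. A subspace $M$ is an $\mathcal{F}$-PR subspace if $\{P_Mf_i\}_{i=1}^N$ is a phase-retrievable frame for $M$, where $P_M$ is the orthogonal projection onto $M$; it is maximal if it is not a proper subspace of another $\mathcal{F}$-PR subspace. *)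

theory Defs
  imports "HOL-Analysis.Analysis"
begin

definition is_frame :: "(nat \<Rightarrow> real^'n) \<Rightarrow> nat \<Rightarrow> bool" where
  "is_frame f N \<longleftrightarrow> span (f ` {..<N}) = UNIV"

definition d_Lam :: "(nat \<Rightarrow> real^'n) \<Rightarrow> nat \<Rightarrow> nat set \<Rightarrow> nat" where
  "d_Lam f N L = max (dim (span (f ` L))) (dim (span (f ` ({..<N} - L))))"

definition d_frame :: "(nat \<Rightarrow> real^'n) \<Rightarrow> nat \<Rightarrow> nat" where
  "d_frame f N = Min {d_Lam f N L | L. L \<subseteq> {..<N}}"

definition proj :: "(real^'n) set \<Rightarrow> real^'n \<Rightarrow> real^'n" where
  "proj M x = (THE y. y \<in> M \<and> (\<forall>z\<in>M. (x - y) \<bullet> z = 0))"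

definition pr_frame_for :: "(nat \<Rightarrow> real^'n) \<Rightarrow> nat \<Rightarrow> (real^'n) set \<Rightarrow> bool" where
  "pr_frame_for g N M \<longleftrightarrow> g ` {..<N} \<subseteq> M \<and> span (g ` {..<N}) = M \<and>
     (\<forall>x\<in>M. \<forall>y\<in>M. (\<forall>i<N. \<bar>x \<bullet> g i\<bar> = \<bar>y \<bullet> g i\<bar>) \<longrightarrow> x = y \<or> x = - y)"

definition F_PR :: "(nat \<Rightarrow> real^'n) \<Rightarrow> nat \<Rightarrow> (real^'n) set \<Rightarrow> bool" where
  "F_PR f N M \<longleftrightarrow> subspace M \<and> pr_frame_for (\<lambda>i. proj M (f i)) N M"

definition maximal_F_PR :: "(nat \<Rightarrow> real^'n) \<Rightarrow> nat \<Rightarrow> (real^'n) set \<Rightarrow> bool" where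
  "maximal_F_PR f N M \<longleftrightarrow> F_PR f N M \<and> \<not> (\<exists>M'. F_PR f N M' \<and> M \<subset> M')"

end

theory Submission
  imports Defs
begin

text \<open>A phase-retrievable frame for \<open>M\<close> has the complement property: for every partition of
  the index set, one of the two parts still spans \<open>M\<close> (otherwise nonzero \<open>u\<close>, \<open>v\<close> orthogonal to
  the respective parts give \<open>|u + v|\<close> and \<open>|u - v|\<close> the same measurements). Projecting cannot raise
  dimensions, so an \<open>\<F>\<close>-PR subspace has dimension at most \<open>d\<^sub>\<Lambda>\<close> for every \<open>\<Lambda>\<close>, hence at most
  \<open>d(\<F>)\<close>. Conversely, choose \<open>W\<close> of dimension \<open>n - d(\<F>)\<close> in general position with respect to the
  finitely many spaces \<open>span \<F>\<^sub>\<Lambda>\<close>, which is possible because proper subspaces are negligible. Every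
  \<open>span \<F>\<^sub>\<Lambda>\<close> of dimension at least \<open>d(\<F>)\<close> then complements \<open>W\<close>, so its projection onto
  \<open>M = W\<^sup>\<bottom>\<close> is all of \<open>M\<close>; thus \<open>M\<close> has the complement property, which for real scalars implies
  phase retrievability. Having the largest possible dimension, \<open>M\<close> is maximal.\<close>

lemma proj_ex1:
  fixes M :: "(real^'n) set"
  assumes "subspace M"
  shows "\<exists>!y. y \<in> M \<and> (\<forall>z\<in>M. (x - y) \<bullet> z = 0)"
proof -
  obtain y z where y: "y \<in> span M" and z: "\<And>w. w \<in> span M \<Longrightarrow> orthogonal z w" and "x = y + z"
    using orthogonal_subspace_decomp_exists[of M x] by metis
  then have "x - y = z" by simp
  moreover have "span M = M" using assms by (simp add: span_eq_iff)
  ultimately have ex: "y \<in> M \<and> (\<forall>w\<in>M. (x - y) \<bullet> w = 0)"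
    using y z unfolding orthogonal_def by metis
  show ?thesis
  proof (rule ex1I[of _ y])
    fix y' assume y': "y' \<in> M \<and> (\<forall>w\<in>M. (x - y') \<bullet> w = 0)"
    then have "y' - y \<in> M" using ex assms by (simp add: subspace_diff)
    then have "((x - y) - (x - y')) \<bullet> (y' - y) = 0"
      using y' ex by (simp add: inner_diff_left)
    then show "y' = y" by simp
  qed (fact ex)
qed

lemma proj_in:
  assumes "subspace M"
  shows "proj M x \<in> M"
  using theI'[OF proj_ex1[OF assms]] unfolding proj_def by blast

lemma proj_orthogonal:
  assumes "subspace M" "z \<in> M"
  shows "(x - proj M x) \<bullet> z = 0"
  using theI'[OF proj_ex1[OF assms(1)]] assms(2) unfolding proj_def by blast

lemma proj_unique:
  assumes "subspace M" "y \<in> M" "\<And>z. z \<in> M \<Longrightarrow> (x - y) \<bullet> z = 0"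
  shows "proj M x = y"
  unfolding proj_def by (rule the1_equality[OF proj_ex1[OF assms(1)]]) (use assms in auto)

lemma proj_eq_self: "subspace M \<Longrightarrow> m \<in> M \<Longrightarrow> proj M m = m"
  by (rule proj_unique) auto

lemma proj_eq_0: "subspace M \<Longrightarrow> (\<And>z. z \<in> M \<Longrightarrow> w \<bullet> z = 0) \<Longrightarrow> proj M w = 0"
  by (rule proj_unique) (auto simp: subspace_0)

lemma linear_proj:
  assumes "subspace M"
  shows "linear (proj M)"
proof (rule linearI)
  fix x y
  show "proj M (x + y) = proj M x + proj M y"
  proof (rule proj_unique[OF assms])
    show "proj M x + proj M y \<in> M" by (simp add: assms proj_in subspace_add)
    fix z assume "z \<in> M"
    then show "(x + y - (proj M x + proj M y)) \<bullet> z = 0"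
      using proj_orthogonal[OF assms, of z x] proj_orthogonal[OF assms, of z y]
      by (simp add: algebra_simps inner_add_left inner_diff_left)
  qed
next
  fix c :: real and x
  show "proj M (c *\<^sub>R x) = c *\<^sub>R proj M x"
  proof (rule proj_unique[OF assms])
    show "c *\<^sub>R proj M x \<in> M" by (simp add: assms proj_in subspace_scale)
    fix z assume "z \<in> M"
    then show "(c *\<^sub>R x - c *\<^sub>R proj M x) \<bullet> z = 0"
      using proj_orthogonal[OF assms, of z x] by (simp flip: scaleR_diff_right)
  qed
qed

lemma span_image_proj:
  assumes "subspace M"
  shows "span ((\<lambda>i. proj M (f i)) ` L) = proj M ` span (f ` L)"
  using span_linear_image[OF linear_proj[OF assms], of "f ` L"] by (simp add: image_image)

definition complement_property :: "(nat \<Rightarrow> 'a::real_vector) \<Rightarrow> nat \<Rightarrow> 'a set \<Rightarrow> bool" where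
  "complement_property g N M \<longleftrightarrow>
     (\<forall>L \<subseteq> {..<N}. span (g ` L) = M \<or> span (g ` ({..<N} - L)) = M)"

lemma subspace_obtain_nonzero_orthogonal:
  fixes M :: "'a::euclidean_space set"
  assumes "subspace M" "span S \<subseteq> M" "span S \<noteq> M"
  obtains u where "u \<in> M" "u \<noteq> 0" "\<And>s. s \<in> S \<Longrightarrow> u \<bullet> s = 0"
proof -
  obtain x where x: "x \<in> M" "x \<notin> span S" using assms by blast
  obtain y z where y: "y \<in> span S" and z: "\<And>w. w \<in> span S \<Longrightarrow> orthogonal z w" and "x = y + z"
    using orthogonal_subspace_decomp_exists[of S x] by metis
  then have "z = x - y" by simp
  then have "z \<in> M" "z \<noteq> 0" using x y assms by (auto intro: subspace_diff)
  moreover have "z \<bullet> s = 0" if "s \<in> S" for s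
    using z[OF span_base[OF that]] unfolding orthogonal_def .
  ultimately show thesis by (rule that)
qed

lemma pr_frame_for_imp_complement_property:
  fixes g :: "nat \<Rightarrow> real^'n"
  assumes M: "subspace M" and P: "pr_frame_for g N M"
  shows "complement_property g N M"
  unfolding complement_property_def
proof (intro allI impI, rule ccontr)
  fix L assume "L \<subseteq> {..<N}" and nc: "\<not> (span (g ` L) = M \<or> span (g ` ({..<N} - L)) = M)"
  have sub: "g ` {..<N} \<subseteq> M"
    and PR: "\<forall>x\<in>M. \<forall>y\<in>M. (\<forall>i<N. \<bar>x \<bullet> g i\<bar> = \<bar>y \<bullet> g i\<bar>) \<longrightarrow> x = y \<or> x = - y"
    using P unfolding pr_frame_for_def by auto
  have "span (g ` L) \<subseteq> M" "span (g ` ({..<N} - L)) \<subseteq> M"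
    using sub \<open>L \<subseteq> {..<N}\<close> M by (intro span_minimal; auto)+
  then obtain u v where u: "u \<in> M" "u \<noteq> 0" "\<And>i. i \<in> L \<Longrightarrow> u \<bullet> g i = 0"
    and v: "v \<in> M" "v \<noteq> 0" "\<And>i. i \<in> {..<N} - L \<Longrightarrow> v \<bullet> g i = 0"
    using subspace_obtain_nonzero_orthogonal[OF M] nc by (metis imageI)
  have "\<bar>(u + v) \<bullet> g i\<bar> = \<bar>(u - v) \<bullet> g i\<bar>" if "i < N" for i
    using u(3)[of i] v(3)[of i] that by (cases "i \<in> L") (auto simp: inner_add_left inner_diff_left)
  moreover have "u + v \<in> M" "u - v \<in> M" using u v M by (auto simp: subspace_add subspace_diff)
  ultimately have "u + v = u - v \<or> u + v = - (u - v)" using PR by blast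
  then have "2 *\<^sub>R v = 0 \<or> 2 *\<^sub>R u = 0" by (auto simp: scaleR_2 algebra_simps)
  then show False using u v by simp
qed

lemma complement_property_imp_pr_frame_for:
  fixes g :: "nat \<Rightarrow> real^'n"
  assumes M: "subspace M" and sub: "g ` {..<N} \<subseteq> M" and sp: "span (g ` {..<N}) = M"
    and C: "complement_property g N M"
  shows "pr_frame_for g N M"
  unfolding pr_frame_for_def
proof (intro conjI sub sp ballI impI)
  fix x y assume x: "x \<in> M" and y: "y \<in> M" and H: "\<forall>i<N. \<bar>x \<bullet> g i\<bar> = \<bar>y \<bullet> g i\<bar>"
  have zero: "z = 0" if "z \<in> M" "span S = M" "\<And>s. s \<in> S \<Longrightarrow> z \<bullet> s = 0" for z S
    using orthogonal_to_span[of z S z] that by (auto simp: orthogonal_def)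
  \<comment> \<open>The measurements of \<open>x\<close> and \<open>y\<close> agree up to sign; split the indices by which sign occurs.\<close>
  define L where "L = {i \<in> {..<N}. x \<bullet> g i = y \<bullet> g i}"
  have flip: "x \<bullet> g i = - (y \<bullet> g i)" if "i \<in> {..<N} - L" for i
    using H that unfolding L_def by (auto simp: abs_eq_iff)
  have "L \<subseteq> {..<N}" unfolding L_def by auto
  then consider "span (g ` L) = M" | "span (g ` ({..<N} - L)) = M"
    using C unfolding complement_property_def by blast
  then show "x = y \<or> x = - y"
  proof cases
    case 1
    then have "x - y = 0"
      by (rule zero[OF subspace_diff[OF M x y]]) (auto simp: L_def inner_diff_left)
    then show ?thesis by simp
  next
    case 2
    then have "x + y = 0"
      by (rule zero[OF subspace_add[OF M x y]]) (auto simp: flip inner_add_left)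
    then show ?thesis by (simp add: eq_neg_iff_add_eq_0)
  qed
qed

lemma d_frame_le_d_Lam: "L \<subseteq> {..<N} \<Longrightarrow> d_frame f N \<le> d_Lam f N L"
  unfolding d_frame_def by (rule Min_le) auto

lemma d_frame_attained:
  obtains L where "L \<subseteq> {..<N}" "d_frame f N = d_Lam f N L"
proof -
  have image: "{d_Lam f N L | L. L \<subseteq> {..<N}} = d_Lam f N ` Pow {..<N}" by auto
  have "d_frame f N \<in> d_Lam f N ` Pow {..<N}"
    unfolding d_frame_def image by (rule Min_in) auto
  then show thesis using that by auto
qed

lemma d_frame_le_DIM: "d_frame (f :: nat \<Rightarrow> real^'n) N \<le> DIM(real^'n)"
  using d_frame_le_d_Lam[of "{..<N}" N f] dim_subset_UNIV[of "f ` {..<N}"]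
  by (simp add: d_Lam_def)

lemma F_PR_dim_le_d_Lam:
  assumes F: "F_PR f N M" and L: "L \<subseteq> {..<N}"
  shows "dim M \<le> d_Lam f N L"
proof -
  have M: "subspace M" and P: "pr_frame_for (\<lambda>i. proj M (f i)) N M"
    using F unfolding F_PR_def by auto
  have le: "dim (span ((\<lambda>i. proj M (f i)) ` K)) \<le> dim (span (f ` K))" for K
    unfolding span_image_proj[OF M] by (rule dim_image_le[OF linear_proj[OF M]])
  from pr_frame_for_imp_complement_property[OF M P] L show ?thesis
    unfolding complement_property_def d_Lam_def
    using le[of L] le[of "{..<N} - L"] by (metis max.coboundedI1 max.coboundedI2 order_trans)
qed

lemma F_PR_dim_le_d_frame: "F_PR f N M \<Longrightarrow> dim M \<le> d_frame f N"
  by (metis F_PR_dim_le_d_Lam d_frame_attained)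

lemma Union_lowdim_neq_UNIV:
  fixes \<P> :: "'a::euclidean_space set set"
  assumes "finite \<P>" "\<And>T. T \<in> \<P> \<Longrightarrow> dim T < DIM('a)"
  shows "\<Union>\<P> \<noteq> UNIV"
proof
  assume "\<Union>\<P> = UNIV"
  moreover have "negligible (\<Union>\<P>)"
    using assms by (intro negligible_Union negligible_lowdim) auto
  ultimately show False using non_negligible_UNIV by simp
qed

lemma span_Un_span: "span (S \<union> span T) = span (S \<union> T)"
  unfolding span_eq by (auto intro: span_base span_mono[of T "S \<union> T", THEN subsetD])

lemma exists_subspace_general_position:
  fixes \<V> :: "'a::euclidean_space set set"
  assumes "finite \<V>" "k \<le> DIM('a)"
  shows "\<exists>W. subspace W \<and> dim W = k \<and>
           (\<forall>V\<in>\<V>. dim (span (V \<union> W)) = min DIM('a) (dim V + k))"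
  using assms(2)
proof (induction k)
  case 0
  have "dim V \<le> DIM('a)" for V :: "'a set" by (rule dim_subset_UNIV)
  then show ?case
    by (intro exI[of _ "{0}"]) (auto simp: subspace_0 min_def intro: antisym)
next
  case (Suc k)
  then obtain W where W: "subspace W" "dim W = k"
    "\<forall>V\<in>\<V>. dim (span (V \<union> W)) = min DIM('a) (dim V + k)"
    by auto
  \<comment> \<open>Extend \<open>W\<close> by a vector outside every proper subspace that \<open>W\<close> spans together with some \<open>V\<close>.\<close>
  define \<P> where "\<P> = insert W {span (V \<union> W) | V. V \<in> \<V> \<and> dim (span (V \<union> W)) < DIM('a)}"
  have "\<Union>\<P> \<noteq> UNIV"
    by (rule Union_lowdim_neq_UNIV) (use assms(1) W Suc.prems in \<open>auto simp: \<P>_def\<close>)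
  then obtain v where v: "v \<notin> \<Union>\<P>" by blast
  have "span W = W" using W(1) by (simp add: span_eq_iff)
  then have "v \<notin> span W" using v unfolding \<P>_def by blast
  define W' where "W' = span (insert v W)"
  have "dim W' = Suc k" unfolding W'_def using \<open>v \<notin> span W\<close> W by (simp add: dim_insert)
  moreover have "dim (span (V \<union> W')) = min DIM('a) (dim V + Suc k)" if V: "V \<in> \<V>" for V
  proof -
    have e: "span (V \<union> W') = span (insert v (V \<union> W))"
      unfolding W'_def span_Un_span by simp
    have "dim (span (V \<union> W')) \<le> DIM('a)" by (rule dim_subset_UNIV)
    moreover have "dim (span (V \<union> W)) = DIM('a) \<or> v \<notin> span (V \<union> W)"
      using v V dim_subset_UNIV[of "span (V \<union> W)"] unfolding \<P>_def by fastforce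
    ultimately show ?thesis
      using W(3) V unfolding e by (auto simp: dim_insert)
  qed
  ultimately show ?case by (intro exI[of _ W']) (auto simp: W'_def)
qed

lemma dim_orthogonal_comp:
  fixes W :: "'a::euclidean_space set"
  assumes "subspace W"
  shows "dim (orthogonal_comp W) = DIM('a) - dim W"
  using dim_subspace_orthogonal_to_vectors[OF assms subspace_UNIV]
  by (simp add: orthogonal_comp_def)

lemma proj_orthogonal_comp_image:
  fixes W :: "(real^'n) set"
  assumes W: "subspace W" and full: "span (V \<union> W) = UNIV"
  shows "proj (orthogonal_comp W) ` span V = orthogonal_comp W"
proof
  let ?M = "orthogonal_comp W"
  have M: "subspace ?M" by (rule subspace_orthogonal_comp)
  show "proj ?M ` span V \<subseteq> ?M" using proj_in[OF M] by blast
  show "?M \<subseteq> proj ?M ` span V"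
  proof
    fix m assume m: "m \<in> ?M"
    obtain a b where a: "a \<in> span V" and "b \<in> span W" and ab: "m = a + b"
      using full unfolding span_Un by blast
    then have "b \<in> W" using span_eq_iff[THEN iffD2, OF W] by simp
    then have "proj ?M b = 0"
      by (intro proj_eq_0[OF M]) (auto simp: orthogonal_comp_def orthogonal_def)
    then have "m = proj ?M a"
      using proj_eq_self[OF M m] linear_add[OF linear_proj[OF M], of a b] by (simp add: ab)
    then show "m \<in> proj ?M ` span V" using a by blast
  qed
qed

lemma exists_F_PR_dim_d_frame:
  fixes f :: "nat \<Rightarrow> real^'n"
  assumes frame: "is_frame f N"
  shows "\<exists>M. F_PR f N M \<and> dim M = d_frame f N"
proof -
  define d where "d = d_frame f N"
  have d: "d \<le> DIM(real^'n)" unfolding d_def by (rule d_frame_le_DIM)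
  obtain W :: "(real^'n) set" where W: "subspace W" "dim W = DIM(real^'n) - d"
    and general: "\<And>L. L \<subseteq> {..<N} \<Longrightarrow>
                    dim (span (f ` L \<union> W)) = min DIM(real^'n) (dim (f ` L) + (DIM(real^'n) - d))"
    using exists_subspace_general_position[of "(\<lambda>L. f ` L) ` Pow {..<N}" "DIM(real^'n) - d"]
    by (auto simp: Ball_def)
  define M where "M = orthogonal_comp W"
  have M: "subspace M" unfolding M_def by (rule subspace_orthogonal_comp)
  let ?g = "\<lambda>i. proj M (f i)"
  have spans: "span (?g ` L) = M" if L: "L \<subseteq> {..<N}" and dL: "d \<le> dim (f ` L)" for L
  proof -
    have "dim (f ` L \<union> W) = DIM(real^'n)"
      using general[OF L] dL d by simp
    then have "span (f ` L \<union> W) = UNIV" by (simp only: dim_eq_full)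
    then have "proj M ` span (f ` L) = M"
      unfolding M_def by (rule proj_orthogonal_comp_image[OF W(1)])
    then show ?thesis by (simp add: span_image_proj[OF M])
  qed
  have "complement_property ?g N M"
    unfolding complement_property_def
  proof (intro allI impI)
    fix L assume L: "L \<subseteq> {..<N}"
    then have "d \<le> dim (f ` L) \<or> d \<le> dim (f ` ({..<N} - L))"
      using d_frame_le_d_Lam[of L N f] by (auto simp: d_def d_Lam_def)
    then show "span (?g ` L) = M \<or> span (?g ` ({..<N} - L)) = M"
      using spans[OF L] spans[of "{..<N} - L"] by auto
  qed
  moreover have "span (?g ` {..<N}) = M"
  proof (rule spans)
    have "dim (f ` {..<N}) = DIM(real^'n)"
      using frame unfolding is_frame_def by (simp only: dim_eq_full)
    then show "d \<le> dim (f ` {..<N})" using d by simp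
  qed simp
  ultimately have "F_PR f N M"
    unfolding F_PR_def using M proj_in[OF M]
    by (auto intro: complement_property_imp_pr_frame_for)
  moreover have "dim M = d" using dim_orthogonal_comp[OF W(1)] W(2) d by (simp add: M_def)
  ultimately show ?thesis unfolding d_def by blast
qed

lemma F_PR_dim_d_frame_imp_maximal:
  assumes F: "F_PR f N M" and dimM: "dim M = d_frame f N"
  shows "maximal_F_PR f N M"
  unfolding maximal_F_PR_def
proof (intro conjI notI F)
  assume "\<exists>M'. F_PR f N M' \<and> M \<subset> M'"
  then obtain M' where M': "F_PR f N M'" "M \<subset> M'" by blast
  have spans: "span M = M" "span M' = M'"
    using F M'(1) unfolding F_PR_def by (simp_all add: span_eq_iff)
  have "dim M < dim M'" by (rule dim_psubset) (simp only: spans M'(2))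
  then show False using F_PR_dim_le_d_frame[OF M'(1)] dimM by simp
qed

theorem theorem3p2:
  fixes f :: "nat \<Rightarrow> real^'n" and N :: nat
  assumes "is_frame f N"
  shows "(\<exists>M. maximal_F_PR f N M \<and> dim M = d_frame f N) \<and>
         (\<forall>k. (\<exists>M. maximal_F_PR f N M \<and> dim M = k) \<longrightarrow> k \<le> d_frame f N)"
proof
  obtain M where "F_PR f N M" "dim M = d_frame f N"
    using exists_F_PR_dim_d_frame[OF assms] by blast
  then show "\<exists>M. maximal_F_PR f N M \<and> dim M = d_frame f N"
    using F_PR_dim_d_frame_imp_maximal by blast
  show "\<forall>k. (\<exists>M. maximal_F_PR f N M \<and> dim M = k) \<longrightarrow> k \<le> d_frame f N"
    using F_PR_dim_le_d_frame unfolding maximal_F_PR_def by blast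
qed

end
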